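(* Let $G$ be a bipartite graph with $n$ vertices, at least one edge, and maximum vertex degree $\Delta$. Then $$EE(G) \ge 2\cosh\sqrt{\Delta} + (n-2),$$ with equality if and only if $G\cong S_n$ or $G\cong S_{\Delta+1}\cup (n-\Delta-1)K_1$.
   Context: All graphs are finite, simple and undirected. For a graph $G$ with adjacency matrix $A(G)$ having eigenvalues $\lambda_1\ge\cdots\ge\lambda_n$, the Estrada index is $EE(G)=\sum_{i=1}^n e^{\lambda_i}$. $S_k=K_{1,k-1}$ denotes the star on $k$ vertices; $\cup$ denotes disjoint union and $rK_1$ denotes $r$ isolated vertices. *)

theory Defs
  imports Complex_Main "Jordan_Normal_Form.Char_Poly"
begin

text \<open>A finite simple graph on the vertex set {0..<n}, given by an adjacency
  relation E (only its values on {0..<n} matter).\<close>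
definition simple_graph :: "nat \<Rightarrow> (nat \<Rightarrow> nat \<Rightarrow> bool) \<Rightarrow> bool" where
  "simple_graph n E \<longleftrightarrow> (\<forall>i<n. \<forall>j<n. E i j \<longleftrightarrow> E j i) \<and> (\<forall>i<n. \<not> E i i)"

definition adj_matrix :: "nat \<Rightarrow> (nat \<Rightarrow> nat \<Rightarrow> bool) \<Rightarrow> real mat" where
  "adj_matrix n E = mat n n (\<lambda>(i, j). if E i j then 1 else 0)"

text \<open>Estrada index: sum of exp over the eigenvalues (with multiplicity) of the
  adjacency matrix, i.e. over the roots of its characteristic polynomial
  (all real since the matrix is real symmetric).\<close>
definition estrada_index :: "nat \<Rightarrow> (nat \<Rightarrow> nat \<Rightarrow> bool) \<Rightarrow> real" where
  "estrada_index n E = (\<Sum>x\<in>#proots (char_poly (adj_matrix n E)). exp x)"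

definition degree :: "nat \<Rightarrow> (nat \<Rightarrow> nat \<Rightarrow> bool) \<Rightarrow> nat \<Rightarrow> nat" where
  "degree n E i = card {j. j < n \<and> E i j}"

definition max_degree :: "nat \<Rightarrow> (nat \<Rightarrow> nat \<Rightarrow> bool) \<Rightarrow> nat" where
  "max_degree n E = Max (degree n E ` {0..<n})"

definition bipartite :: "nat \<Rightarrow> (nat \<Rightarrow> nat \<Rightarrow> bool) \<Rightarrow> bool" where
  "bipartite n E \<longleftrightarrow> (\<exists>c :: nat \<Rightarrow> bool. \<forall>i<n. \<forall>j<n. E i j \<longrightarrow> c i \<noteq> c j)"

definition has_edge :: "nat \<Rightarrow> (nat \<Rightarrow> nat \<Rightarrow> bool) \<Rightarrow> bool" where
  "has_edge n E \<longleftrightarrow> (\<exists>i<n. \<exists>j<n. E i j)"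

definition graph_iso :: "nat \<Rightarrow> (nat \<Rightarrow> nat \<Rightarrow> bool) \<Rightarrow> (nat \<Rightarrow> nat \<Rightarrow> bool) \<Rightarrow> bool" where
  "graph_iso n E F \<longleftrightarrow> (\<exists>f. bij_betw f {0..<n} {0..<n} \<and>
      (\<forall>i<n. \<forall>j<n. E i j \<longleftrightarrow> F (f i) (f j)))"

text \<open>Star S_k = K_{1,k-1} on vertices {0..<k} (centre 0), together with isolated
  vertices k, k+1, ... (when viewed on a larger vertex set {0..<n}, this is
  S_k \<union> (n-k)K_1).\<close>
definition star_plus_isolated :: "nat \<Rightarrow> nat \<Rightarrow> nat \<Rightarrow> bool" where
  "star_plus_isolated k i j \<longleftrightarrow> i < k \<and> j < k \<and> i \<noteq> j \<and> (i = 0 \<or> j = 0)"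

end

theory Submission
  imports Defs "Jordan_Normal_Form.Schur_Decomposition"
begin

text \<open>Let \<open>u\<close> be a vertex of maximum degree \<open>\<Delta>\<close>. The \<open>\<Delta>\<close> edges at \<open>u\<close> form a spanning
  subgraph of \<open>G\<close>, a star plus isolated vertices, whose adjacency matrix satisfies \<open>A\<^sup>3 = \<Delta> A\<close>;
  hence \<open>tr A\<^sup>k = \<surd>\<Delta>\<^sup>k + (-\<surd>\<Delta>)\<^sup>k\<close> for \<open>k \<ge> 1\<close> and its Estrada index is \<open>2 cosh \<surd>\<Delta> + n - 2\<close>.
  For any graph, \<open>EE = \<Sum>\<^sub>k tr A\<^sup>k / k!\<close> (a real symmetric matrix has real eigenvalues and is
  triangularisable over the reals), and \<open>tr A\<^sup>k\<close> counts closed walks, so it can only grow when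
  edges are added. Thus \<open>EE(G) \<ge> 2 cosh \<surd>\<Delta> + n - 2\<close>, and since \<open>tr A\<^sup>2\<close> is the degree sum,
  equality holds exactly when every edge of \<open>G\<close> is incident to \<open>u\<close>.\<close>

section \<open>Traces of powers and spectra of real symmetric matrices\<close>

definition trace :: "'a::comm_ring_1 mat \<Rightarrow> 'a" where
  "trace A = (\<Sum>i = 0..<dim_row A. A $$ (i,i))"

lemma trace_mult_comm:
  assumes "A \<in> carrier_mat n m" and "B \<in> carrier_mat m n"
  shows "trace (A * B) = trace (B * A)"
proof -
  have "trace (A * B) = (\<Sum>i = 0..<n. \<Sum>l = 0..<m. A $$ (i,l) * B $$ (l,i))"
    unfolding trace_def using assms by (auto simp: scalar_prod_def intro!: sum.cong)
  also have "\<dots> = (\<Sum>l = 0..<m. \<Sum>i = 0..<n. B $$ (l,i) * A $$ (i,l))"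
    by (subst sum.swap) (simp add: mult.commute)
  also have "\<dots> = trace (B * A)"
    unfolding trace_def using assms by (auto simp: scalar_prod_def intro!: sum.cong)
  finally show ?thesis .
qed

lemma trace_one_mat: "trace (1\<^sub>m n) = of_nat n"
  unfolding trace_def by simp

lemma trace_smult: "A \<in> carrier_mat n n \<Longrightarrow> trace (c \<cdot>\<^sub>m A) = c * trace A"
  unfolding trace_def by (simp add: sum_distrib_left)

lemma upper_triangular_mult:
  fixes A B :: "'a::comm_ring_1 mat"
  assumes A: "A \<in> carrier_mat n n" and B: "B \<in> carrier_mat n n"
    and utA: "upper_triangular A" and utB: "upper_triangular B"
  shows "upper_triangular (A * B)"
    and "i < n \<Longrightarrow> (A * B) $$ (i,i) = A $$ (i,i) * B $$ (i,i)"
proof -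
  have A0: "A $$ (i,l) = 0" and B0: "B $$ (i,l) = 0" if "i < n" "l < i" for i l
    using that A B utA utB by auto
  have entry: "(A * B) $$ (i,j) = (\<Sum>l = 0..<n. A $$ (i,l) * B $$ (l,j))" if "i < n" "j < n" for i j
    using that A B by (auto simp: scalar_prod_def intro!: sum.cong)
  show "upper_triangular (A * B)"
  proof
    fix i j assume "i < dim_row (A * B)" and ji: "j < i"
    then have i: "i < n" using A by simp
    have "A $$ (i,l) * B $$ (l,j) = 0" if "l < n" for l
      using A0[OF i] B0[OF that] ji by (cases "l < i") auto
    then show "(A * B) $$ (i,j) = 0"
      using entry[OF i] i ji by simp
  qed
  assume i: "i < n"
  have "A $$ (i,l) * B $$ (l,i) = 0" if "l < n" "l \<noteq> i" for l
    using A0[OF i] B0[OF that(1)] that by (cases "l < i") auto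
  then show "(A * B) $$ (i,i) = A $$ (i,i) * B $$ (i,i)"
    using i by (simp add: entry sum.remove[of _ i] sum.neutral)
qed

lemma upper_triangular_pow:
  fixes A :: "'a::comm_ring_1 mat"
  assumes A: "A \<in> carrier_mat n n" and ut: "upper_triangular A"
  shows "upper_triangular (A ^\<^sub>m k) \<and> (\<forall>i<n. (A ^\<^sub>m k) $$ (i,i) = A $$ (i,i) ^ k)"
proof (induction k)
  case 0
  show ?case using A by auto
next
  case (Suc k)
  have "A ^\<^sub>m k \<in> carrier_mat n n" using A by simp
  with Suc upper_triangular_mult[OF _ A _ ut] show ?case by simp
qed

lemma pow_mat_shift_of_cube:
  fixes A :: "'a::comm_ring_1 mat"
  assumes A: "A \<in> carrier_mat n n" and cube: "A * A * A = c \<cdot>\<^sub>m A"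
  shows "A ^\<^sub>m Suc (Suc (Suc k)) = c \<cdot>\<^sub>m A ^\<^sub>m Suc k"
proof (induction k)
  case 0
  show ?case using A cube by (simp add: left_mult_one_mat)
next
  case (Suc k)
  have "A ^\<^sub>m Suc (Suc (Suc (Suc k))) = A ^\<^sub>m Suc (Suc (Suc k)) * A"
    by (rule pow_mat.simps(2))
  also have "\<dots> = (c \<cdot>\<^sub>m A ^\<^sub>m Suc k) * A"
    unfolding Suc ..
  also have "\<dots> = c \<cdot>\<^sub>m A ^\<^sub>m Suc (Suc k)"
    by (simp, rule mult_smult_assoc_mat) (use A in auto)
  finally show ?case .
qed

lemma trace_pow_eq_power_sum_roots:
  fixes A :: "'a::conjugatable_ordered_field mat"
  assumes A: "A \<in> carrier_mat n n" and cp: "char_poly A = (\<Prod>c\<leftarrow>cs. [:- c, 1:])"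
  shows "trace (A ^\<^sub>m k) = (\<Sum>c\<leftarrow>cs. c ^ k)"
proof -
  obtain B P Q where schur: "schur_decomposition A cs = (B,P,Q)"
    by (cases "schur_decomposition A cs") auto
  from schur_decomposition[OF A cp schur]
  have wit: "similar_mat_wit A B P Q" and ut: "upper_triangular B" and dg: "diag_mat B = cs"
    by auto
  from similar_mat_witD2[OF A wit] have B: "B \<in> carrier_mat n n" and P: "P \<in> carrier_mat n n"
    and Q: "Q \<in> carrier_mat n n" and QP: "Q * P = 1\<^sub>m n" by auto
  have len: "length cs = n" using dg B by (auto simp: diag_mat_def)
  have Bk: "B ^\<^sub>m k \<in> carrier_mat n n" using B by simp
  have "trace (A ^\<^sub>m k) = trace (P * B ^\<^sub>m k * Q)"
    by (simp add: similar_mat_wit_pow_id[OF wit])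
  also have "\<dots> = trace (Q * (P * B ^\<^sub>m k))"
    using P Bk Q by (intro trace_mult_comm) auto
  also have "Q * (P * B ^\<^sub>m k) = B ^\<^sub>m k"
    using P Bk Q QP by (simp add: left_mult_one_mat flip: assoc_mult_mat)
  also have "trace (B ^\<^sub>m k) = (\<Sum>i = 0..<n. (cs ! i) ^ k)"
    unfolding trace_def using upper_triangular_pow[OF B ut] B dg
    by (intro sum.cong) (auto simp: diag_mat_def)
  also have "\<dots> = (\<Sum>c\<leftarrow>cs. c ^ k)"
    using len by (simp add: sum_list_sum_nth)
  finally show ?thesis .
qed

lemma eigenvalue_real_symmetric:
  fixes A :: "real mat"
  assumes A: "A \<in> carrier_mat n n"
    and sym: "\<And>i j. i < n \<Longrightarrow> j < n \<Longrightarrow> A $$ (i,j) = A $$ (j,i)"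
    and ev: "eigenvalue (map_mat complex_of_real A) c"
  shows "Im c = 0"
proof -
  let ?Ac = "map_mat complex_of_real A"
  obtain v where "eigenvector ?Ac v c" using ev unfolding eigenvalue_def by blast
  then have v: "v \<in> carrier_vec n" and v0: "v \<noteq> 0\<^sub>v n" and eq: "?Ac *\<^sub>v v = c \<cdot>\<^sub>v v"
    using A unfolding eigenvector_def by auto
  \<comment> \<open>\<open>s = v\<^sup>* A v = c |v|\<^sup>2\<close> is real because \<open>A\<close> is real symmetric\<close>
  define s where "s = (\<Sum>i = 0..<n. cnj (v $ i) * (?Ac *\<^sub>v v) $ i)"
  define N where "N = (\<Sum>i = 0..<n. (cmod (v $ i))\<^sup>2)"
  have s_expand: "s = (\<Sum>i = 0..<n. \<Sum>j = 0..<n. cnj (v $ i) * of_real (A $$ (i,j)) * v $ j)"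
    unfolding s_def using v A
    by (auto simp: scalar_prod_def sum_distrib_left mult.assoc intro!: sum.cong)
  have "cnj s = (\<Sum>i = 0..<n. \<Sum>j = 0..<n. v $ i * of_real (A $$ (i,j)) * cnj (v $ j))"
    unfolding s_expand by (simp add: cnj_sum)
  also have "\<dots> = (\<Sum>j = 0..<n. \<Sum>i = 0..<n. v $ i * of_real (A $$ (i,j)) * cnj (v $ j))"
    by (rule sum.swap)
  also have "\<dots> = s"
    unfolding s_expand by (intro sum.cong refl) (auto simp: sym mult.commute mult.left_commute)
  finally have "Im s = 0" by (metis Im_complex_of_real Reals_cnj_iff complex_is_Real_iff)
  moreover have "s = c * of_real N"
    unfolding s_def N_def eq of_real_sum using v
    by (auto simp: sum_distrib_left complex_norm_square mult.commute simp del: of_real_power intro!: sum.cong)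
  moreover have "N > 0"
  proof -
    have "\<exists>i<n. v $ i \<noteq> 0"
    proof (rule ccontr)
      assume "\<not> ?thesis"
      then have "v = 0\<^sub>v n" using v by (intro eq_vecI) auto
      with v0 show False ..
    qed
    then obtain i where "i < n" "v $ i \<noteq> 0" by blast
    then show ?thesis unfolding N_def by (intro sum_pos2[of _ i]) auto
  qed
  ultimately show ?thesis by simp
qed

lemma char_poly_real_symmetric_splits:
  fixes A :: "real mat"
  assumes A: "A \<in> carrier_mat n n"
    and sym: "\<And>i j. i < n \<Longrightarrow> j < n \<Longrightarrow> A $$ (i,j) = A $$ (j,i)"
  obtains es where "char_poly A = (\<Prod>e\<leftarrow>es. [:- e, 1:])"
proof -
  interpret of_real_poly: map_poly_inj_idom_hom complex_of_real ..
  let ?Ac = "map_mat complex_of_real A"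
  have Ac: "?Ac \<in> carrier_mat n n" using A by simp
  obtain cs where cp: "char_poly ?Ac = (\<Prod>c\<leftarrow>cs. [:- c, 1:])"
    using char_poly_factorized[OF Ac] by blast
  have "Im c = 0" if "c \<in> set cs" for c
  proof -
    have "poly (char_poly ?Ac) c = 0"
      unfolding cp poly_prod_list using that by (induction cs) auto
    then show ?thesis
      using eigenvalue_root_char_poly[OF Ac] eigenvalue_real_symmetric[OF A sym] by blast
  qed
  then have cs: "cs = map complex_of_real (map Re cs)"
    by (induction cs) (auto simp: complex_eq_iff)
  have "map_poly complex_of_real (char_poly A) = char_poly ?Ac"
    by (rule of_real_hom.char_poly_hom[OF A, symmetric])
  also have "\<dots> = map_poly complex_of_real (\<Prod>e\<leftarrow>map Re cs. [:- e, 1:])"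
    unfolding cp by (subst cs) (simp add: of_real_poly.hom_prod_list o_def)
  finally have "char_poly A = (\<Prod>e\<leftarrow>map Re cs. [:- e, 1:])" by simp
  then show ?thesis by (rule that)
qed

lemma proots_prod_linear_factors: "proots (\<Prod>e\<leftarrow>es. [:- e, 1:]) = mset (es :: 'a :: idom list)"
proof (induction es)
  case (Cons a es)
  have "(\<Prod>e\<leftarrow>es. [:- e, 1:]) \<noteq> (0 :: 'a poly)" by (auto simp: prod_list_zero_iff)
  then show ?case using Cons by (simp add: proots_mult del: mult_pCons_left)
qed simp

lemma exp_trace_series_real_symmetric:
  fixes A :: "real mat"
  assumes A: "A \<in> carrier_mat n n"
    and sym: "\<And>i j. i < n \<Longrightarrow> j < n \<Longrightarrow> A $$ (i,j) = A $$ (j,i)"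
  shows "(\<lambda>k. trace (A ^\<^sub>m k) / fact k) sums (\<Sum>x\<in>#proots (char_poly A). exp x)"
proof -
  obtain es where cp: "char_poly A = (\<Prod>e\<leftarrow>es. [:- e, 1:])"
    using char_poly_real_symmetric_splits[OF A sym] .
  have "proots (char_poly A) = mset es"
    unfolding cp by (rule proots_prod_linear_factors)
  moreover have "(\<lambda>k. (\<Sum>e\<leftarrow>es. e ^ k) / fact k) sums (\<Sum>e\<leftarrow>es. exp e)"
  proof (induction es)
    case (Cons e es)
    have "(\<lambda>k. e ^ k / fact k) sums exp e"
      using exp_converges[of e] by (simp add: divide_inverse mult.commute)
    from sums_add[OF this Cons] show ?case by (simp add: add_divide_distrib)
  qed simp
  ultimately show ?thesis
    by (simp add: trace_pow_eq_power_sum_roots[OF A cp] sum_mset_sum_list flip: mset_map)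
qed

section \<open>The Estrada index as a series of traces\<close>

lemma adj_matrix_carrier: "adj_matrix n E \<in> carrier_mat n n"
  unfolding adj_matrix_def by simp

lemma dim_adj_matrix [simp]:
  "dim_row (adj_matrix n E) = n" "dim_col (adj_matrix n E) = n"
  unfolding adj_matrix_def by simp_all

lemma adj_matrix_index [simp]:
  "i < n \<Longrightarrow> j < n \<Longrightarrow> adj_matrix n E $$ (i,j) = (if E i j then 1 else 0)"
  unfolding adj_matrix_def by simp

lemma adj_matrix_mult_index:
  assumes "M \<in> carrier_mat n m" "i < n" "j < m"
  shows "(adj_matrix n E * M) $$ (i,j) = (\<Sum>l \<in> {l. l < n \<and> E i l}. M $$ (l,j))"
proof -
  have "(adj_matrix n E * M) $$ (i,j) = (\<Sum>l = 0..<n. if E i l then M $$ (l,j) else 0)"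
    using assms by (auto simp: scalar_prod_def intro!: sum.cong)
  also have "\<dots> = (\<Sum>l \<in> {l. l < n \<and> E i l}. M $$ (l,j))"
    by (simp add: sum.inter_filter[symmetric] atLeast0LessThan)
  finally show ?thesis .
qed

lemma adj_matrix_cong:
  "(\<And>i j. i < n \<Longrightarrow> j < n \<Longrightarrow> E i j = F i j) \<Longrightarrow> adj_matrix n E = adj_matrix n F"
  by (rule eq_matI) (auto simp: adj_matrix_def)

lemma estrada_index_cong:
  "(\<And>i j. i < n \<Longrightarrow> j < n \<Longrightarrow> E i j = F i j) \<Longrightarrow> estrada_index n E = estrada_index n F"
  unfolding estrada_index_def by (metis adj_matrix_cong)

lemma estrada_index_sums:
  assumes "simple_graph n E"
  shows "(\<lambda>k. trace (adj_matrix n E ^\<^sub>m k) / fact k) sums estrada_index n E"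
  unfolding estrada_index_def
  by (rule exp_trace_series_real_symmetric[OF adj_matrix_carrier])
    (use assms in \<open>auto simp: simple_graph_def\<close>)

lemma pow_mono_nonneg_mat:
  fixes A B :: "'a::linordered_semiring_1 mat"
  assumes A: "A \<in> carrier_mat n n" and B: "B \<in> carrier_mat n n"
    and le: "\<And>i j. i < n \<Longrightarrow> j < n \<Longrightarrow> 0 \<le> A $$ (i,j) \<and> A $$ (i,j) \<le> B $$ (i,j)"
    and ij: "i < n" "j < n"
  shows "0 \<le> (A ^\<^sub>m k) $$ (i,j) \<and> (A ^\<^sub>m k) $$ (i,j) \<le> (B ^\<^sub>m k) $$ (i,j)"
  using ij
proof (induction k arbitrary: j)
  case 0
  then show ?case using A B by simp
next
  case (Suc k)
  have "A ^\<^sub>m k \<in> carrier_mat n n" and "B ^\<^sub>m k \<in> carrier_mat n n" using A B by auto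
  then have entry: "(M ^\<^sub>m Suc k) $$ (i,j) = (\<Sum>l = 0..<n. (M ^\<^sub>m k) $$ (i,l) * M $$ (l,j))"
    if "M \<in> carrier_mat n n" for M :: "'a mat"
    using that Suc.prems by (auto simp: scalar_prod_def intro!: sum.cong)
  have "0 \<le> (A ^\<^sub>m k) $$ (i,l) * A $$ (l,j)" if "l < n" for l
    using Suc that le by simp
  moreover have "(A ^\<^sub>m k) $$ (i,l) * A $$ (l,j) \<le> (B ^\<^sub>m k) $$ (i,l) * B $$ (l,j)" if "l < n" for l
    using Suc that le[of l j] by (intro mult_mono) (auto intro: order_trans)
  ultimately show ?case
    unfolding entry[OF A] entry[OF B] by (auto intro!: sum_nonneg sum_mono)
qed

lemma trace_adj_matrix_pow_mono:
  assumes "\<And>i j. i < n \<Longrightarrow> j < n \<Longrightarrow> F i j \<Longrightarrow> E i j"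
  shows "trace (adj_matrix n F ^\<^sub>m k) \<le> trace (adj_matrix n E ^\<^sub>m k)"
proof -
  have "(adj_matrix n F ^\<^sub>m k) $$ (i,i) \<le> (adj_matrix n E ^\<^sub>m k) $$ (i,i)" if "i < n" for i
    using pow_mono_nonneg_mat[OF adj_matrix_carrier adj_matrix_carrier, of n F E] assms that by simp
  then show ?thesis
    unfolding trace_def by (auto intro: sum_mono)
qed

lemma trace_adj_matrix_square:
  assumes "simple_graph n E"
  shows "trace (adj_matrix n E ^\<^sub>m 2) = (\<Sum>i = 0..<n. real (degree n E i))"
proof -
  have "(adj_matrix n E ^\<^sub>m 2) $$ (i,i) = real (degree n E i)" if i: "i < n" for i
  proof -
    have "(adj_matrix n E ^\<^sub>m 2) $$ (i,i) = (\<Sum>l = 0..<n. if E i l then 1 else 0)"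
      using i assms adj_matrix_carrier[of n E]
      by (auto simp: numeral_2_eq_2 scalar_prod_def simple_graph_def intro!: sum.cong)
    also have "\<dots> = real (degree n E i)"
      by (simp add: sum.If_cases degree_def Int_def conj_commute)
    finally show ?thesis .
  qed
  then show ?thesis unfolding trace_def using adj_matrix_carrier[of n E] by simp
qed

lemma degree_mono:
  assumes "\<And>j. j < n \<Longrightarrow> F i j \<Longrightarrow> E i j"
  shows "degree n F i \<le> degree n E i"
  unfolding degree_def using assms by (intro card_mono) auto

lemma degree_strict_mono:
  assumes "\<And>j. j < n \<Longrightarrow> F i j \<Longrightarrow> E i j" and "j < n" "E i j" "\<not> F i j"
  shows "degree n F i < degree n E i"
  unfolding degree_def using assms by (intro psubset_card_mono) auto

lemma estrada_index_diff_sums: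
  assumes "simple_graph n E" "simple_graph n F"
  shows "(\<lambda>k. (trace (adj_matrix n E ^\<^sub>m k) - trace (adj_matrix n F ^\<^sub>m k)) / fact k)
           sums (estrada_index n E - estrada_index n F)"
  using sums_diff[OF estrada_index_sums[OF assms(1)] estrada_index_sums[OF assms(2)]]
  by (simp add: diff_divide_distrib)

lemma estrada_index_subgraph_le:
  assumes "simple_graph n E" "simple_graph n F"
    and "\<And>i j. i < n \<Longrightarrow> j < n \<Longrightarrow> F i j \<Longrightarrow> E i j"
  shows "estrada_index n F \<le> estrada_index n E"
  using sums_le[OF _ sums_zero estrada_index_diff_sums[OF assms(1,2)]] trace_adj_matrix_pow_mono[OF assms(3)]
  by simp

lemma estrada_index_subgraph_less:
  assumes E: "simple_graph n E" and F: "simple_graph n F"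
    and sub: "\<And>i j. i < n \<Longrightarrow> j < n \<Longrightarrow> F i j \<Longrightarrow> E i j"
    and "a < n" "b < n" "E a b" "\<not> F a b"
  shows "estrada_index n F < estrada_index n E"
proof -
  note diff = estrada_index_diff_sums[OF E F]
  \<comment> \<open>the series of the difference has nonnegative terms and a positive quadratic term\<close>
  have "trace (adj_matrix n F ^\<^sub>m 2) < trace (adj_matrix n E ^\<^sub>m 2)"
    unfolding trace_adj_matrix_square[OF E] trace_adj_matrix_square[OF F]
    using assms degree_strict_mono[of n F a E b]
    by (intro sum_strict_mono_ex1) (auto intro!: degree_mono)
  then have "0 < (\<Sum>k. (trace (adj_matrix n E ^\<^sub>m k) - trace (adj_matrix n F ^\<^sub>m k)) / fact k)"
    using trace_adj_matrix_pow_mono[OF sub] by (intro suminf_pos2[OF sums_summable[OF diff], of 2]) auto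
  then show ?thesis using sums_unique[OF diff] by simp
qed

section \<open>Stars\<close>

definition star_graph :: "nat \<Rightarrow> nat set \<Rightarrow> nat \<Rightarrow> nat \<Rightarrow> bool" where
  "star_graph u N i j \<longleftrightarrow> (i = u \<and> j \<in> N) \<or> (j = u \<and> i \<in> N)"

lemma star_plus_isolated_eq_star_graph: "star_plus_isolated k = star_graph 0 {1..<k}"
  by (auto simp: fun_eq_iff star_plus_isolated_def star_graph_def)

context
  fixes n u :: nat and N :: "nat set"
  assumes u: "u < n" and N: "N \<subseteq> {0..<n}" and uN: "u \<notin> N"
begin

lemma simple_graph_star_graph: "simple_graph n (star_graph u N)"
  using uN unfolding simple_graph_def star_graph_def by auto

lemma star_graph_centre: "star_graph u N u j \<longleftrightarrow> j \<in> N"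
  and star_graph_leaf: "l \<in> N \<Longrightarrow> star_graph u N l j \<longleftrightarrow> j = u"
  and star_graph_other: "i \<noteq> u \<Longrightarrow> i \<notin> N \<Longrightarrow> \<not> star_graph u N i j"
  using uN unfolding star_graph_def by auto

lemma star_graph_leaf_less: "l \<in> N \<Longrightarrow> l < n"
  and star_graph_leaf_ne_centre: "l \<in> N \<Longrightarrow> l \<noteq> u"
  using N uN by auto

lemma star_graph_neighbours:
  "{l. l < n \<and> star_graph u N i l} = (if i = u then N else if i \<in> N then {u} else {})"
  using u N uN unfolding star_graph_def by auto

lemma star_graph_adj_square:
  assumes "i < n" "j < n"
  shows "(adj_matrix n (star_graph u N) * adj_matrix n (star_graph u N)) $$ (i,j) =
    (if i = u \<and> j = u then real (card N) else if i \<in> N \<and> j \<in> N then 1 else 0)"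
  using assms u uN
  by (auto simp: adj_matrix_mult_index[OF adj_matrix_carrier] star_graph_neighbours
      star_graph_centre star_graph_leaf star_graph_leaf_less simp del: index_mult_mat(1)
      cong: sum.cong_simp)

lemma star_graph_adj_cube:
  "adj_matrix n (star_graph u N) * adj_matrix n (star_graph u N) * adj_matrix n (star_graph u N) =
    real (card N) \<cdot>\<^sub>m adj_matrix n (star_graph u N)"
  (is "?A * ?A * ?A = _")
proof (rule eq_matI)
  fix i j assume "i < dim_row (real (card N) \<cdot>\<^sub>m ?A)" "j < dim_col (real (card N) \<cdot>\<^sub>m ?A)"
  then have i: "i < n" and j: "j < n" by simp_all
  have "(?A * (?A * ?A)) $$ (i,j) = (\<Sum>l \<in> {l. l < n \<and> star_graph u N i l}. (?A * ?A) $$ (l,j))"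
    by (rule adj_matrix_mult_index[OF mult_carrier_mat[OF adj_matrix_carrier adj_matrix_carrier] i j])
  also have "\<dots> = real (card N) * ?A $$ (i,j)"
    using i j u uN
    by (auto simp: star_graph_neighbours star_graph_adj_square star_graph_centre star_graph_leaf
        star_graph_other star_graph_leaf_less star_graph_leaf_ne_centre
        simp del: index_mult_mat(1) cong: sum.cong_simp)
  finally show "(?A * ?A * ?A) $$ (i,j) = (real (card N) \<cdot>\<^sub>m ?A) $$ (i,j)"
    using i j by (simp only: assoc_mult_mat[OF adj_matrix_carrier adj_matrix_carrier adj_matrix_carrier])
      simp
qed auto

lemma trace_star_graph_pow:
  "trace (adj_matrix n (star_graph u N) ^\<^sub>m Suc k) =
    sqrt (card N) ^ Suc k + (- sqrt (card N)) ^ Suc k"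
proof (induction k rule: nat_induct2)
  case 0
  show ?case using uN by (simp add: trace_def star_graph_def)
next
  case 1
  have "adj_matrix n (star_graph u N) ^\<^sub>m 2 = adj_matrix n (star_graph u N) * adj_matrix n (star_graph u N)"
    by (simp add: numeral_2_eq_2 left_mult_one_mat adj_matrix_carrier)
  then have "trace (adj_matrix n (star_graph u N) ^\<^sub>m 2) =
      (\<Sum>i = 0..<n. (adj_matrix n (star_graph u N) * adj_matrix n (star_graph u N)) $$ (i,i))"
    by (simp add: trace_def)
  also have "\<dots> = (\<Sum>i = 0..<n. if i = u then real (card N) else if i \<in> N then 1 else 0)"
    by (intro sum.cong refl, subst star_graph_adj_square) auto
  also have "\<dots> = 2 * real (card N)"
    using u N uN by (simp add: sum.If_cases Int_absorb1)
  finally show ?case by (simp add: numeral_2_eq_2)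
next
  case (step k)
  have "adj_matrix n (star_graph u N) ^\<^sub>m Suc (k + 2) =
      real (card N) \<cdot>\<^sub>m adj_matrix n (star_graph u N) ^\<^sub>m Suc k"
    using pow_mat_shift_of_cube[OF adj_matrix_carrier star_graph_adj_cube, of k]
    by (simp add: numeral_2_eq_2)
  then have "trace (adj_matrix n (star_graph u N) ^\<^sub>m Suc (k + 2)) =
      trace (real (card N) \<cdot>\<^sub>m adj_matrix n (star_graph u N) ^\<^sub>m Suc k)"
    by (rule arg_cong)
  also have "\<dots> = real (card N) * trace (adj_matrix n (star_graph u N) ^\<^sub>m Suc k)"
    by (rule trace_smult[OF pow_carrier_mat[OF adj_matrix_carrier]])
  finally have "trace (adj_matrix n (star_graph u N) ^\<^sub>m Suc (k + 2)) =
      real (card N) * trace (adj_matrix n (star_graph u N) ^\<^sub>m Suc k)" .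
  moreover have "x ^ Suc (k + 2) + (- x) ^ Suc (k + 2) = x\<^sup>2 * (x ^ Suc k + (- x) ^ Suc k)" for x :: real
    by (simp add: power2_eq_square algebra_simps)
  ultimately show ?case using step by simp
qed

lemma estrada_index_star_graph:
  "estrada_index n (star_graph u N) = 2 * cosh (sqrt (card N)) + (real n - 2)"
proof -
  let ?s = "sqrt (card N)"
  have "(\<lambda>k. ?s ^ k / fact k + (- ?s) ^ k / fact k + (if k = 0 then real n - 2 else 0))
        sums (exp ?s + exp (- ?s) + (real n - 2))"
    using exp_converges[of ?s] exp_converges[of "- ?s"] sums_single[of 0 "\<lambda>_. real n - 2"]
    by (intro sums_add) (simp_all add: divide_inverse mult.commute)
  moreover have "?s ^ k / fact k + (- ?s) ^ k / fact k + (if k = 0 then real n - 2 else 0) =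
      trace (adj_matrix n (star_graph u N) ^\<^sub>m k) / fact k" for k
  proof (cases k)
    case (Suc m)
    then show ?thesis using trace_star_graph_pow[of m] by (simp add: add_divide_distrib diff_divide_distrib)
  qed (simp add: trace_one_mat)
  ultimately have "(\<lambda>k. trace (adj_matrix n (star_graph u N) ^\<^sub>m k) / fact k)
      sums (exp ?s + exp (- ?s) + (real n - 2))" by simp
  from sums_unique2[OF estrada_index_sums[OF simple_graph_star_graph] this]
  show ?thesis by (simp add: cosh_def)
qed

end

section \<open>Graphs whose edges share a vertex\<close>

lemma star_graph_neighbourhood_iff:
  assumes "simple_graph n E" "i < n" "j < n"
  shows "star_graph u {l. l < n \<and> E u l} i j \<longleftrightarrow> E i j \<and> (i = u \<or> j = u)"
  using assms unfolding simple_graph_def star_graph_def by auto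

lemma estrada_index_star_bound:
  assumes E: "simple_graph n E" and u: "u < n"
  shows "2 * cosh (sqrt (real (degree n E u))) + (real n - 2) \<le> estrada_index n E"
    and "estrada_index n E = 2 * cosh (sqrt (real (degree n E u))) + (real n - 2) \<longleftrightarrow>
      (\<forall>i<n. \<forall>j<n. E i j \<longrightarrow> i = u \<or> j = u)"
proof -
  define N where "N = {l. l < n \<and> E u l}"
  have N: "N \<subseteq> {0..<n}" and uN: "u \<notin> N"
    using E unfolding N_def simple_graph_def by auto
  have star: "simple_graph n (star_graph u N)"
    by (rule simple_graph_star_graph[OF u N uN])
  have sub: "star_graph u N i j \<Longrightarrow> E i j" if "i < n" "j < n" for i j
    using star_graph_neighbourhood_iff[OF E that] unfolding N_def by blast
  have star_value: "estrada_index n (star_graph u N) = 2 * cosh (sqrt (real (degree n E u))) + (real n - 2)"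
    using estrada_index_star_graph[OF u N uN] by (simp add: N_def degree_def)
  then show "2 * cosh (sqrt (real (degree n E u))) + (real n - 2) \<le> estrada_index n E"
    using estrada_index_subgraph_le[OF E star sub] by simp
  show "estrada_index n E = 2 * cosh (sqrt (real (degree n E u))) + (real n - 2) \<longleftrightarrow>
      (\<forall>i<n. \<forall>j<n. E i j \<longrightarrow> i = u \<or> j = u)"
  proof
    assume "estrada_index n E = 2 * cosh (sqrt (real (degree n E u))) + (real n - 2)"
    then show "\<forall>i<n. \<forall>j<n. E i j \<longrightarrow> i = u \<or> j = u"
      using estrada_index_subgraph_less[OF E star sub] star_value star_graph_neighbourhood_iff[OF E]
      unfolding N_def by fastforce
  next
    assume "\<forall>i<n. \<forall>j<n. E i j \<longrightarrow> i = u \<or> j = u"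
    then have "estrada_index n E = estrada_index n (star_graph u N)"
      using star_graph_neighbourhood_iff[OF E] unfolding N_def by (intro estrada_index_cong) blast
    then show "estrada_index n E = 2 * cosh (sqrt (real (degree n E u))) + (real n - 2)"
      using star_value by simp
  qed
qed

lemma graph_iso_sym:
  assumes "graph_iso n E F"
  shows "graph_iso n F E"
proof -
  obtain f where f: "bij_betw f {0..<n} {0..<n}" and iso: "\<forall>i<n. \<forall>j<n. E i j \<longleftrightarrow> F (f i) (f j)"
    using assms unfolding graph_iso_def by blast
  let ?g = "inv_into {0..<n} f"
  have g: "bij_betw ?g {0..<n} {0..<n}" by (rule bij_betw_inv_into[OF f])
  have "F i j \<longleftrightarrow> E (?g i) (?g j)" if "i < n" "j < n" for i j
    using iso bij_betwE[OF g] bij_betw_inv_into_right[OF f] that by auto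
  with g show ?thesis unfolding graph_iso_def by blast
qed

lemma graph_iso_star_graph:
  assumes u: "u < n" and N: "N \<subseteq> {0..<n}" and uN: "u \<notin> N"
  shows "graph_iso n (star_plus_isolated (card N + 1)) (star_graph u N)"
proof -
  define ys where "ys = sorted_list_of_set N"
  define zs where "zs = sorted_list_of_set ({0..<n} - insert u N)"
  define xs where "xs = u # ys @ zs"
  have fin: "finite N" using N finite_subset by blast
  have ys: "set ys = N" "distinct ys" "length ys = card N"
    using fin unfolding ys_def by auto
  have zs: "set zs = {0..<n} - insert u N" "distinct zs"
    unfolding zs_def by auto
  have set_xs: "set xs = {0..<n}" and dist: "distinct xs"
    using u N uN ys zs unfolding xs_def by auto
  then have len: "length xs = n"
    using distinct_card[OF dist] by simp
  have bij: "bij_betw ((!) xs) {0..<n} {0..<n}"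
    using bij_betw_nth[OF dist _ set_xs[symmetric]] len by (simp add: atLeast0LessThan)
  have "xs ! 0 = u" by (simp add: xs_def)
  then have centre: "xs ! i = u \<longleftrightarrow> i = 0" if "i < n" for i
    using nth_eq_iff_index_eq[OF dist, of i 0] that len u by auto
  have leaf: "xs ! i \<in> N \<longleftrightarrow> i \<in> {1..<card N + 1}" if "i < n" for i
  proof (cases i)
    case (Suc m)
    then have "xs ! i = (ys @ zs) ! m" unfolding xs_def by simp
    moreover have "m < card N + length zs" using Suc that len ys unfolding xs_def by simp
    moreover have "(ys @ zs) ! m \<in> N \<longleftrightarrow> m < card N"
    proof (cases "m < card N")
      case True
      then show ?thesis using nth_mem[of m ys] ys by (simp add: nth_append)
    next
      case False
      with calculation have "m - card N < length zs" by simp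
      then show ?thesis using nth_mem[of "m - card N" zs] False ys zs by (simp add: nth_append)
    qed
    ultimately show ?thesis using Suc by simp
  qed (use uN in \<open>simp add: xs_def\<close>)
  have "star_plus_isolated (card N + 1) i j \<longleftrightarrow> star_graph u N (xs ! i) (xs ! j)"
    if "i < n" "j < n" for i j
    using centre[OF that(1)] centre[OF that(2)] leaf[OF that(1)] leaf[OF that(2)]
    unfolding star_plus_isolated_eq_star_graph star_graph_def by auto
  with bij show ?thesis unfolding graph_iso_def by blast
qed

lemma graph_iso_star_plus_isolated_if_edges_at:
  assumes E: "simple_graph n E" and u: "u < n"
    and at_u: "\<forall>i<n. \<forall>j<n. E i j \<longrightarrow> i = u \<or> j = u"
  shows "graph_iso n E (star_plus_isolated (degree n E u + 1))"
proof -
  define N where "N = {l. l < n \<and> E u l}"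
  have N: "N \<subseteq> {0..<n}" and uN: "u \<notin> N"
    using E unfolding N_def simple_graph_def by auto
  have agree: "E i j \<longleftrightarrow> star_graph u N i j" if "i < n" "j < n" for i j
    using star_graph_neighbourhood_iff[OF E that] at_u that unfolding N_def by blast
  from graph_iso_sym[OF graph_iso_star_graph[OF u N uN]] agree
  show ?thesis unfolding graph_iso_def N_def degree_def by simp
qed

lemma centre_of_graph_iso_star_plus_isolated:
  assumes "graph_iso n E (star_plus_isolated k)" and "has_edge n E"
  obtains v where "v < n" "\<forall>i<n. \<forall>j<n. E i j \<longrightarrow> i = v \<or> j = v"
proof -
  obtain f where f: "bij_betw f {0..<n} {0..<n}"
    and iso: "\<forall>i<n. \<forall>j<n. E i j \<longleftrightarrow> star_plus_isolated k (f i) (f j)"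
    using assms(1) unfolding graph_iso_def by blast
  have "0 < n" using assms(2) unfolding has_edge_def by auto
  then obtain v where v: "v < n" "f v = 0"
    using bij_betw_imp_surj_on[OF f] by (metis atLeastLessThan_iff imageE le0)
  have "i = v \<or> j = v" if "i < n" "j < n" "E i j" for i j
    using iso that v bij_betw_imp_inj_on[OF f]
    unfolding star_plus_isolated_def inj_on_def by (metis atLeastLessThan_iff le0)
  with v that show ?thesis by blast
qed

lemma max_degree_eq_degree_if_edges_at:
  assumes E: "simple_graph n E" and "has_edge n E" and v: "v < n"
    and at_v: "\<forall>i<n. \<forall>j<n. E i j \<longrightarrow> i = v \<or> j = v"
  shows "max_degree n E = degree n E v"
  unfolding max_degree_def
proof (rule Max_eqI)
  obtain a b where ab: "a < n" "b < n" "E a b" using assms(2) unfolding has_edge_def by blast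
  then have "\<exists>w<n. E v w" using at_v E unfolding simple_graph_def by metis
  then have "1 \<le> degree n E v" unfolding degree_def by (auto simp: Suc_le_eq card_gt_0_iff)
  moreover have "degree n E w \<le> 1" if "w < n" "w \<noteq> v" for w
  proof -
    have "{j. j < n \<and> E w j} \<subseteq> {v}" using at_v that by auto
    then show ?thesis unfolding degree_def using card_mono[of "{v}"] by fastforce
  qed
  ultimately show "d \<le> degree n E v" if "d \<in> degree n E ` {0..<n}" for d
    using that by (cases "d = degree n E v") force+
qed (use v in auto)

lemma max_degree_attained:
  assumes "has_edge n E"
  obtains u where "u < n" "degree n E u = max_degree n E"
proof -
  have "degree n E ` {0..<n} \<noteq> {}" using assms unfolding has_edge_def by auto
  then have "max_degree n E \<in> degree n E ` {0..<n}" unfolding max_degree_def by (intro Max_in) auto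
  with that show ?thesis by auto
qed

theorem mainTheorem9:
  fixes n :: nat and E :: "nat \<Rightarrow> nat \<Rightarrow> bool"
  assumes "simple_graph n E" and "bipartite n E" and "has_edge n E"
  defines "\<Delta> \<equiv> max_degree n E"
  shows "estrada_index n E \<ge> 2 * cosh (sqrt (real \<Delta>)) + (real n - 2) \<and>
         (estrada_index n E = 2 * cosh (sqrt (real \<Delta>)) + (real n - 2) \<longleftrightarrow>
           graph_iso n E (star_plus_isolated n) \<or> graph_iso n E (star_plus_isolated (\<Delta> + 1)))"
proof -
  note E = assms(1) and edge = assms(3)
  obtain u where u: "u < n" and deg_u: "degree n E u = \<Delta>"
    using max_degree_attained[OF edge] unfolding \<Delta>_def .
  have "estrada_index n E = 2 * cosh (sqrt (real \<Delta>)) + (real n - 2) \<longleftrightarrow>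
      graph_iso n E (star_plus_isolated n) \<or> graph_iso n E (star_plus_isolated (\<Delta> + 1))"
  proof
    assume "estrada_index n E = 2 * cosh (sqrt (real \<Delta>)) + (real n - 2)"
    then show "graph_iso n E (star_plus_isolated n) \<or> graph_iso n E (star_plus_isolated (\<Delta> + 1))"
      using estrada_index_star_bound(2)[OF E u] graph_iso_star_plus_isolated_if_edges_at[OF E u] deg_u
      by simp
  next
    assume "graph_iso n E (star_plus_isolated n) \<or> graph_iso n E (star_plus_isolated (\<Delta> + 1))"
    then obtain k where "graph_iso n E (star_plus_isolated k)" by blast
    then obtain v where v: "v < n" and at_v: "\<forall>i<n. \<forall>j<n. E i j \<longrightarrow> i = v \<or> j = v"
      using centre_of_graph_iso_star_plus_isolated edge by blast
    then show "estrada_index n E = 2 * cosh (sqrt (real \<Delta>)) + (real n - 2)"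
      using estrada_index_star_bound(2)[OF E v] max_degree_eq_degree_if_edges_at[OF E edge v at_v]
      unfolding \<Delta>_def by simp
  qed
  then show ?thesis using estrada_index_star_bound(1)[OF E u] deg_u by simp
qed

end
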